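(* Let $\omega\in(0,\pi/2]$ and let $K$ be a cap with rotation angle $\omega$. For every $0\le t<\omega$ the right derivatives of $\mathbf{y}_K$ and $\mathbf{x}_K$ at $t$ exist and equal $$\partial^+\mathbf{y}_K(t)=-g_K^+(t)u_t+h_K^+(t)v_t,\qquad \partial^+\mathbf{x}_K(t)=-(g_K^+(t)-1)u_t+(h_K^+(t)-1)v_t.$$ For every $0<t\le\omega$ the left derivatives exist and equal $$\partial^-\mathbf{y}_K(t)=-g_K^-(t)u_t+h_K^-(t)v_t,\qquad \partial^-\mathbf{x}_K(t)=-(g_K^-(t)-1)u_t+(h_K^-(t)-1)v_t.$$
   Context: For $t\in\mathbb{R}$ let $u_t=(\cos t,\sin t)$, $v_t=(-\sin t,\cos t)$; $p_K(t)=\max_{p\in K}p\cdot u_t$; $H(t,h)=\{p:p\cdot u_t\le h\}$. With $J_\omega=[0,\omega]\cup[\pi/2,\pi/2+\omega]$, a cap with rotation angle $\omega$ is a nonempty compact convex $K\subset\mathbb{R}^2$ with $p_K(\omega)=p_K(\pi/2)=1$, $p_K(\pi+\omega)=p_K(3\pi/2)=0$, which is an intersection of closed half-planes $H(t,h)$ with $t\in J_\omega\cup\{\pi+\omega,3\pi/2\}$. The edge $e_K(t)=\{p\in K:p\cdot u_t=p_K(t)\}$ is a segment (possibly a point); $v_K^+(t)$ (resp. $v_K^-(t)$) is its endpoint farthest in direction $v_t$ (resp. $-v_t$). Set $A_K^\pm(t)=v_K^\pm(t)$, $C_K^\pm(t)=v_K^\pm(t+\pi/2)$. For $t\in[0,\omega]$: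 $\mathbf{y}_K(t)=p_K(t)u_t+p_K(t+\pi/2)v_t$, $\mathbf{x}_K(t)=\mathbf{y}_K(t)-u_t-v_t$; $g_K^\pm(t)$ is the real number with $\mathbf{y}_K(t)=A_K^\pm(t)+g_K^\pm(t)v_t$, and $h_K^\pm(t)$ is the real number with $\mathbf{y}_K(t)=C_K^\pm(t)+h_K^\pm(t)u_t$. $\partial^+$ and $\partial^-$ denote right and left derivatives. *)

theory Defs
  imports "HOL-Analysis.Analysis"
begin

type_synonym pt = "real \<times> real"

definition uvec :: "real \<Rightarrow> pt" where "uvec t = (cos t, sin t)"
definition vvec :: "real \<Rightarrow> pt" where "vvec t = (- sin t, cos t)"

definition supp :: "pt set \<Rightarrow> real \<Rightarrow> real" where
  "supp K t = Sup ((\<lambda>p. p \<bullet> uvec t) ` K)"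

definition halfplane :: "real \<Rightarrow> real \<Rightarrow> pt set" where
  "halfplane t h = {p. p \<bullet> uvec t \<le> h}"

definition Jset :: "real \<Rightarrow> real set" where
  "Jset \<omega> = {0..\<omega>} \<union> {pi/2..pi/2 + \<omega>}"

definition is_cap :: "real \<Rightarrow> pt set \<Rightarrow> bool" where
  "is_cap \<omega> K \<longleftrightarrow> K \<noteq> {} \<and> compact K \<and> convex K \<and>
     supp K \<omega> = 1 \<and> supp K (pi/2) = 1 \<and> supp K (pi + \<omega>) = 0 \<and> supp K (3*pi/2) = 0 \<and>
     (\<exists>S. S \<subseteq> (Jset \<omega> \<union> {pi + \<omega>, 3*pi/2}) \<times> UNIV \<and>
          K = \<Inter> ((\<lambda>(t,h). halfplane t h) ` S))"

definition edge :: "pt set \<Rightarrow> real \<Rightarrow> pt set" where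
  "edge K t = {p \<in> K. p \<bullet> uvec t = supp K t}"

definition vplus :: "pt set \<Rightarrow> real \<Rightarrow> pt" where
  "vplus K t = (THE p. p \<in> edge K t \<and> (\<forall>q \<in> edge K t. q \<bullet> vvec t \<le> p \<bullet> vvec t))"
definition vminus :: "pt set \<Rightarrow> real \<Rightarrow> pt" where
  "vminus K t = (THE p. p \<in> edge K t \<and> (\<forall>q \<in> edge K t. p \<bullet> vvec t \<le> q \<bullet> vvec t))"

definition Aplus :: "pt set \<Rightarrow> real \<Rightarrow> pt" where "Aplus K t = vplus K t"
definition Aminus :: "pt set \<Rightarrow> real \<Rightarrow> pt" where "Aminus K t = vminus K t"
definition Cplus :: "pt set \<Rightarrow> real \<Rightarrow> pt" where "Cplus K t = vplus K (t + pi/2)"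
definition Cminus :: "pt set \<Rightarrow> real \<Rightarrow> pt" where "Cminus K t = vminus K (t + pi/2)"

definition yK :: "pt set \<Rightarrow> real \<Rightarrow> pt" where
  "yK K t = supp K t *\<^sub>R uvec t + supp K (t + pi/2) *\<^sub>R vvec t"
definition xK :: "pt set \<Rightarrow> real \<Rightarrow> pt" where
  "xK K t = yK K t - uvec t - vvec t"

definition gplus :: "pt set \<Rightarrow> real \<Rightarrow> real" where
  "gplus K t = (THE g. yK K t = Aplus K t + g *\<^sub>R vvec t)"
definition gminus :: "pt set \<Rightarrow> real \<Rightarrow> real" where
  "gminus K t = (THE g. yK K t = Aminus K t + g *\<^sub>R vvec t)"
definition hplus :: "pt set \<Rightarrow> real \<Rightarrow> real" where
  "hplus K t = (THE h. yK K t = Cplus K t + h *\<^sub>R uvec t)"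
definition hminus :: "pt set \<Rightarrow> real \<Rightarrow> real" where
  "hminus K t = (THE h. yK K t = Cminus K t + h *\<^sub>R uvec t)"

end

theory Submission
  imports Defs "HOL-Real_Asymp.Real_Asymp"
begin

(* Rotating the direction from u towards w by an angle d, the support function of a compact set
   changes to first order by d times the largest w-coordinate on the face in direction u: points
   of the face give the lower bound, and points with larger w-coordinate lie a fixed distance
   \<delta> below the face, which beats their gain of order d.  Applied at u = u_\<tau>, w = \<plusminus>v_\<tau>, this
   gives the one-sided derivatives of p_K at \<tau> as the v_\<tau>-coordinates of v_K^\<plusminus>(\<tau>); the formulas
   for y_K and x_K then follow from the product rule, u_t' = v_t and v_t' = -u_t. *)

definition support :: "'a::real_inner set \<Rightarrow> 'a \<Rightarrow> real" where
  "support K x = Sup ((\<lambda>q. q \<bullet> x) ` K)"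

lemma inner_le_support:
  fixes K :: "'a::real_inner set"
  assumes "compact K" and "p \<in> K"
  shows "p \<bullet> x \<le> support K x"
  unfolding support_def using assms
  by (intro cSUP_upper bounded_imp_bdd_above compact_imp_bounded compact_continuous_image
      continuous_intros)

lemma support_least:
  fixes K :: "'a::real_inner set"
  assumes "K \<noteq> {}" and "\<And>q. q \<in> K \<Longrightarrow> q \<bullet> x \<le> c"
  shows "support K x \<le> c"
  unfolding support_def using assms by (rule cSUP_least)

lemma support_attained:
  fixes K :: "'a::real_inner set"
  assumes "compact K" and "K \<noteq> {}"
  obtains p where "p \<in> K" and "p \<bullet> x = support K x"
proof -
  have "continuous_on K (\<lambda>q. q \<bullet> x)"
    by (intro continuous_intros)
  then obtain p where p: "p \<in> K" "\<forall>q\<in>K. q \<bullet> x \<le> p \<bullet> x"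
    using continuous_attains_sup[OF assms] by blast
  then have "p \<bullet> x = support K x"
    using assms by (intro antisym inner_le_support support_least) auto
  with p show thesis using that by blast
qed

lemma compact_face_gap:
  fixes K :: "'a::real_inner set"
  assumes "compact K" and max: "\<forall>q\<in>K. q \<bullet> u \<le> A \<bullet> u"
    and face_max: "\<forall>q\<in>K. q \<bullet> u = A \<bullet> u \<longrightarrow> q \<bullet> w \<le> A \<bullet> w" and "\<epsilon> > 0"
  obtains \<delta> where "\<delta> > 0" and "\<forall>q\<in>K. A \<bullet> w + \<epsilon> \<le> q \<bullet> w \<longrightarrow> q \<bullet> u \<le> A \<bullet> u - \<delta>"
proof (cases "K \<inter> {q. A \<bullet> w + \<epsilon> \<le> q \<bullet> w} = {}")
  case True
  then show thesis using that[of 1] by auto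
next
  case False
  define S where "S = K \<inter> {q. A \<bullet> w + \<epsilon> \<le> q \<bullet> w}"
  have "closed {q. A \<bullet> w + \<epsilon> \<le> q \<bullet> w}"
    by (intro closed_Collect_le continuous_intros)
  then have "compact S"
    unfolding S_def using assms(1) by blast
  moreover have "S \<noteq> {}" and "continuous_on S (\<lambda>q. q \<bullet> u)"
    using False by (auto simp: S_def intro: continuous_intros)
  ultimately obtain q0 where q0: "q0 \<in> S" and q0_max: "\<forall>q\<in>S. q \<bullet> u \<le> q0 \<bullet> u"
    using continuous_attains_sup by blast
  have "q0 \<bullet> u \<noteq> A \<bullet> u"
    using q0 face_max \<open>\<epsilon> > 0\<close> by (fastforce simp: S_def)
  then have "q0 \<bullet> u < A \<bullet> u"
    using q0 max by (force simp: S_def)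
  then show thesis
    using that[of "A \<bullet> u - q0 \<bullet> u"] q0_max by (auto simp: S_def)
qed

lemma support_rotation_eventually_le:
  fixes K :: "'a::real_inner set"
  assumes "compact K" and "A \<in> K" and max: "\<forall>q\<in>K. q \<bullet> u \<le> A \<bullet> u"
    and face_max: "\<forall>q\<in>K. q \<bullet> u = A \<bullet> u \<longrightarrow> q \<bullet> w \<le> A \<bullet> w" and "\<epsilon> > 0"
  shows "eventually (\<lambda>d. support K (cos d *\<^sub>R u + sin d *\<^sub>R w)
           \<le> cos d * (A \<bullet> u) + sin d * (A \<bullet> w + \<epsilon>)) (at_right 0)"
proof -
  obtain \<delta> where "\<delta> > 0" and gap: "\<forall>q\<in>K. A \<bullet> w + \<epsilon> \<le> q \<bullet> w \<longrightarrow> q \<bullet> u \<le> A \<bullet> u - \<delta>"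
    using compact_face_gap[OF assms(1) max face_max \<open>\<epsilon> > 0\<close>] .
  obtain M where M: "\<forall>q\<in>K. q \<bullet> w \<le> M"
    using inner_le_support[OF \<open>compact K\<close>, of _ w] by blast
  have "((\<lambda>d. cos d * \<delta> - sin d * (M - A \<bullet> w - \<epsilon>)) \<longlongrightarrow> cos 0 * \<delta> - sin 0 * (M - A \<bullet> w - \<epsilon>))
      (at_right 0)"
    by (intro tendsto_intros)
  then have "eventually (\<lambda>d. sin d * (M - A \<bullet> w - \<epsilon>) < cos d * \<delta>) (at_right 0)"
    using \<open>\<delta> > 0\<close> by (auto dest: order_tendstoD)
  moreover have "eventually (\<lambda>d. 0 < d \<and> d < pi/2) (at_right (0::real))"
    unfolding eventually_at_right_field by (intro exI[of _ "pi/2"]) auto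
  ultimately show ?thesis
  proof eventually_elim
    case (elim d)
    then have "sin d > 0" and "cos d > 0" by (auto intro: sin_gt_zero cos_gt_zero)
    have "cos d * (q \<bullet> u) + sin d * (q \<bullet> w) \<le> cos d * (A \<bullet> u) + sin d * (A \<bullet> w + \<epsilon>)"
      if "q \<in> K" for q
    proof (cases "A \<bullet> w + \<epsilon> \<le> q \<bullet> w")
      case True
      then have "cos d * (q \<bullet> u) \<le> cos d * (A \<bullet> u - \<delta>)" and "sin d * (q \<bullet> w) \<le> sin d * M"
        using gap M \<open>q \<in> K\<close> \<open>sin d > 0\<close> \<open>cos d > 0\<close> by (auto intro: mult_left_mono)
      then show ?thesis using elim by (simp add: algebra_simps)
    next
      case False
      then have "cos d * (q \<bullet> u) \<le> cos d * (A \<bullet> u)" and "sin d * (q \<bullet> w) \<le> sin d * (A \<bullet> w + \<epsilon>)"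
        using max \<open>q \<in> K\<close> \<open>sin d > 0\<close> \<open>cos d > 0\<close> by (auto intro: mult_left_mono)
      then show ?thesis by simp
    qed
    then show ?case
      using \<open>A \<in> K\<close> by (intro support_least) (auto simp: inner_add_right)
  qed
qed

lemma support_rotation_right_limit:
  fixes K :: "'a::real_inner set"
  assumes "compact K" and "A \<in> K" and max: "\<forall>q\<in>K. q \<bullet> u \<le> A \<bullet> u"
    and face_max: "\<forall>q\<in>K. q \<bullet> u = A \<bullet> u \<longrightarrow> q \<bullet> w \<le> A \<bullet> w"
  shows "((\<lambda>d. (support K (cos d *\<^sub>R u + sin d *\<^sub>R w) - A \<bullet> u) / d) \<longlongrightarrow> A \<bullet> w) (at_right 0)"
proof -
  have bound_limit: "((\<lambda>d. (cos d * (A \<bullet> u) + sin d * c - A \<bullet> u) / d) \<longlongrightarrow> c) (at_right 0)" for c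
    by real_asymp
  show ?thesis
  proof (rule order_tendstoI)
    fix a assume "a < A \<bullet> w"
    then have "eventually (\<lambda>d. a < (cos d * (A \<bullet> u) + sin d * (A \<bullet> w) - A \<bullet> u) / d) (at_right 0)"
      by (rule order_tendstoD(1)[OF bound_limit])
    moreover have "eventually (\<lambda>d. (0::real) < d) (at_right 0)"
      by (simp add: eventually_at_right_less)
    ultimately show "eventually (\<lambda>d. a < (support K (cos d *\<^sub>R u + sin d *\<^sub>R w) - A \<bullet> u) / d)
        (at_right 0)"
    proof eventually_elim
      case (elim d)
      have "cos d * (A \<bullet> u) + sin d * (A \<bullet> w) \<le> support K (cos d *\<^sub>R u + sin d *\<^sub>R w)"
        using inner_le_support[OF \<open>compact K\<close> \<open>A \<in> K\<close>, of "cos d *\<^sub>R u + sin d *\<^sub>R w"]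
        by (simp add: inner_add_right)
      with elim show ?case
        by (smt (verit) divide_right_mono)
    qed
  next
    fix a assume "a > A \<bullet> w"
    define \<epsilon> where "\<epsilon> = (a - A \<bullet> w) / 2"
    have "\<epsilon> > 0" and "A \<bullet> w + \<epsilon> < a" using \<open>a > A \<bullet> w\<close> by (simp_all add: \<epsilon>_def field_simps)
    then have "eventually (\<lambda>d. (cos d * (A \<bullet> u) + sin d * (A \<bullet> w + \<epsilon>) - A \<bullet> u) / d < a)
        (at_right 0)"
      by (intro order_tendstoD(2)[OF bound_limit])
    moreover note support_rotation_eventually_le[OF assms \<open>\<epsilon> > 0\<close>]
    moreover have "eventually (\<lambda>d. (0::real) < d) (at_right 0)"
      by (simp add: eventually_at_right_less)
    ultimately show "eventually (\<lambda>d. (support K (cos d *\<^sub>R u + sin d *\<^sub>R w) - A \<bullet> u) / d < a)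
        (at_right 0)"
    proof eventually_elim
      case (elim d)
      then show ?case by (smt (verit) divide_right_mono)
    qed
  qed
qed

lemma has_real_derivative_at_right_iff:
  "(f has_real_derivative D) (at_right t) \<longleftrightarrow>
     ((\<lambda>d. (f (t + d) - f t) / d) \<longlongrightarrow> D) (at_right 0)"
  unfolding has_field_derivative_iff filterlim_at_right_to_0[of _ _ t] by (simp add: add.commute)

lemma has_real_derivative_at_left_iff:
  "(f has_real_derivative D) (at_left t) \<longleftrightarrow>
     ((\<lambda>d. (f t - f (t - d)) / d) \<longlongrightarrow> D) (at_right 0)"
  unfolding has_field_derivative_iff
  unfolding at_left_minus filterlim_filtermap filterlim_at_right_to_0[of _ _ "- t"]
  by (simp add: minus_divide_left)

lemma inner_pt: "(p::pt) \<bullet> q = fst p * fst q + snd p * snd q"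
  by (simp add: inner_prod_def)

lemma inner_uvec_uvec [simp]: "uvec t \<bullet> uvec t = 1"
  and inner_vvec_vvec [simp]: "vvec t \<bullet> vvec t = 1"
  and inner_uvec_vvec [simp]: "uvec t \<bullet> vvec t = 0"
  and inner_vvec_uvec [simp]: "vvec t \<bullet> uvec t = 0"
  by (auto simp: uvec_def vvec_def inner_pt power2_eq_square[symmetric])

lemma pt_decomp: "p = (p \<bullet> uvec t) *\<^sub>R uvec t + (p \<bullet> vvec t) *\<^sub>R vvec t"
  by (simp add: prod_eq_iff uvec_def vvec_def inner_pt algebra_simps
      flip: power2_eq_square distrib_left)

lemma uvec_add: "uvec (t + d) = cos d *\<^sub>R uvec t + sin d *\<^sub>R vvec t"
  by (simp add: uvec_def vvec_def cos_add sin_add prod_eq_iff algebra_simps)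

lemma uvec_diff: "uvec (t - d) = cos d *\<^sub>R uvec t + sin d *\<^sub>R (- vvec t)"
  by (simp add: uvec_def vvec_def cos_diff sin_diff prod_eq_iff algebra_simps)

lemma uvec_add_pi_half [simp]: "uvec (t + pi/2) = vvec t"
  by (simp add: uvec_def vvec_def cos_add sin_add)

lemma vvec_add_pi_half [simp]: "vvec (t + pi/2) = - uvec t"
  by (simp add: uvec_def vvec_def cos_add sin_add)

lemma supp_eq_support: "supp K t = support K (uvec t)"
  unfolding supp_def support_def ..

lemma edge_compact:
  assumes "compact K"
  shows "compact (edge K t)"
proof -
  have "closed {p. p \<bullet> uvec t = supp K t}"
    by (intro closed_Collect_eq continuous_intros)
  then show ?thesis
    using assms by (simp add: edge_def Collect_conj_eq compact_Int_closed)
qed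

lemma edge_nonempty:
  assumes "compact K" and "K \<noteq> {}"
  shows "edge K t \<noteq> {}"
proof -
  obtain p where "p \<in> K" and "p \<bullet> uvec t = support K (uvec t)"
    using support_attained[OF assms] .
  then show ?thesis
    unfolding edge_def supp_eq_support by blast
qed

lemma edge_eqI:
  assumes "p \<in> edge K t" and "q \<in> edge K t" and "p \<bullet> vvec t = q \<bullet> vvec t"
  shows "p = q"
proof -
  have "p \<bullet> uvec t = q \<bullet> uvec t"
    using assms(1,2) by (simp add: edge_def)
  then have "(p \<bullet> uvec t) *\<^sub>R uvec t + (p \<bullet> vvec t) *\<^sub>R vvec t
      = (q \<bullet> uvec t) *\<^sub>R uvec t + (q \<bullet> vvec t) *\<^sub>R vvec t"
    using assms(3) by simp
  then show ?thesis
    by (simp flip: pt_decomp)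
qed

lemma vplus_edge_max:
  assumes "compact K" and "K \<noteq> {}"
  shows "vplus K t \<in> edge K t \<and> (\<forall>q \<in> edge K t. q \<bullet> vvec t \<le> vplus K t \<bullet> vvec t)"
proof -
  have "continuous_on (edge K t) (\<lambda>q. q \<bullet> vvec t)"
    by (intro continuous_intros)
  then obtain p where p: "p \<in> edge K t" "\<forall>q\<in>edge K t. q \<bullet> vvec t \<le> p \<bullet> vvec t"
    using continuous_attains_sup[OF edge_compact[OF assms(1)] edge_nonempty[OF assms]] by blast
  have uniq: "x = p" if "x \<in> edge K t" "\<forall>q\<in>edge K t. q \<bullet> vvec t \<le> x \<bullet> vvec t" for x
  proof (rule edge_eqI[OF that(1) p(1)])
    show "x \<bullet> vvec t = p \<bullet> vvec t"
      using that p by (intro order_antisym) auto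
  qed
  show ?thesis
    unfolding vplus_def by (rule theI2[of _ p]) (use p uniq in blast)+
qed

lemma vminus_edge_min:
  assumes "compact K" and "K \<noteq> {}"
  shows "vminus K t \<in> edge K t \<and> (\<forall>q \<in> edge K t. vminus K t \<bullet> vvec t \<le> q \<bullet> vvec t)"
proof -
  have "continuous_on (edge K t) (\<lambda>q. q \<bullet> vvec t)"
    by (intro continuous_intros)
  then obtain p where p: "p \<in> edge K t" "\<forall>q\<in>edge K t. p \<bullet> vvec t \<le> q \<bullet> vvec t"
    using continuous_attains_inf[OF edge_compact[OF assms(1)] edge_nonempty[OF assms]] by blast
  have uniq: "x = p" if "x \<in> edge K t" "\<forall>q\<in>edge K t. x \<bullet> vvec t \<le> q \<bullet> vvec t" for x
  proof (rule edge_eqI[OF that(1) p(1)])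
    show "x \<bullet> vvec t = p \<bullet> vvec t"
      using that p by (intro order_antisym) auto
  qed
  show ?thesis
    unfolding vminus_def by (rule theI2[of _ p]) (use p uniq in blast)+
qed

lemma supp_right_quotient:
  assumes "compact K" and "K \<noteq> {}"
  shows "((\<lambda>d. (supp K (t + d) - supp K t) / d) \<longlongrightarrow> vplus K t \<bullet> vvec t) (at_right 0)"
proof -
  define A where "A = vplus K t"
  have "A \<in> K" and A_supp: "A \<bullet> uvec t = supp K t"
    and face_max: "\<forall>q\<in>K. q \<bullet> uvec t = A \<bullet> uvec t \<longrightarrow> q \<bullet> vvec t \<le> A \<bullet> vvec t"
    using vplus_edge_max[OF assms, of t] by (auto simp: A_def edge_def)
  have "\<forall>q\<in>K. q \<bullet> uvec t \<le> A \<bullet> uvec t"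
    using inner_le_support[OF assms(1)] A_supp by (simp add: supp_eq_support)
  from support_rotation_right_limit[OF assms(1) \<open>A \<in> K\<close> this face_max]
  show ?thesis
    by (simp add: A_supp supp_eq_support uvec_add flip: A_def)
qed

lemma supp_left_quotient:
  assumes "compact K" and "K \<noteq> {}"
  shows "((\<lambda>d. (supp K t - supp K (t - d)) / d) \<longlongrightarrow> vminus K t \<bullet> vvec t) (at_right 0)"
proof -
  define A where "A = vminus K t"
  have "A \<in> K" and A_supp: "A \<bullet> uvec t = supp K t"
    and face_max: "\<forall>q\<in>K. q \<bullet> uvec t = A \<bullet> uvec t \<longrightarrow> q \<bullet> - vvec t \<le> A \<bullet> - vvec t"
    using vminus_edge_min[OF assms, of t] by (auto simp: A_def edge_def)
  have "\<forall>q\<in>K. q \<bullet> uvec t \<le> A \<bullet> uvec t"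
    using inner_le_support[OF assms(1)] A_supp by (simp add: supp_eq_support)
  from tendsto_minus[OF support_rotation_right_limit[OF assms(1) \<open>A \<in> K\<close> this face_max]]
  show ?thesis
    by (simp add: A_supp supp_eq_support uvec_diff minus_divide_left flip: A_def)
qed

lemma supp_has_right_derivative:
  assumes "compact K" and "K \<noteq> {}"
  shows "((\<lambda>s. supp K (s + c)) has_real_derivative vplus K (t + c) \<bullet> vvec (t + c)) (at_right t)"
  unfolding has_real_derivative_at_right_iff
  using supp_right_quotient[OF assms, of "t + c"] by (simp add: ac_simps)

lemma supp_has_left_derivative:
  assumes "compact K" and "K \<noteq> {}"
  shows "((\<lambda>s. supp K (s + c)) has_real_derivative vminus K (t + c) \<bullet> vvec (t + c)) (at_left t)"
  unfolding has_real_derivative_at_left_iff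
  using supp_left_quotient[OF assms, of "t + c"] by (simp add: algebra_simps)

lemma uvec_has_vector_derivative: "(uvec has_vector_derivative vvec t) (at t within S)"
  unfolding uvec_def[abs_def] vvec_def
  by (auto intro!: has_vector_derivative_Pair derivative_eq_intros
      simp flip: has_real_derivative_iff_has_vector_derivative)

lemma vvec_has_vector_derivative: "(vvec has_vector_derivative - uvec t) (at t within S)"
  unfolding vvec_def[abs_def] uvec_def
  by (auto intro!: has_vector_derivative_Pair derivative_eq_intros
      simp flip: has_real_derivative_iff_has_vector_derivative)

lemma yK_has_vector_derivative:
  assumes "(supp K has_real_derivative a) (at t within S)"
    and "((\<lambda>s. supp K (s + pi/2)) has_real_derivative b) (at t within S)"
  shows "(yK K has_vector_derivative
           (a - supp K (t + pi/2)) *\<^sub>R uvec t + (supp K t + b) *\<^sub>R vvec t) (at t within S)"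
proof -
  have "((\<lambda>s. supp K s *\<^sub>R uvec s + supp K (s + pi/2) *\<^sub>R vvec s) has_vector_derivative
      (supp K t *\<^sub>R vvec t + a *\<^sub>R uvec t) + (supp K (t + pi/2) *\<^sub>R - uvec t + b *\<^sub>R vvec t))
      (at t within S)"
    by (intro has_vector_derivative_add has_vector_derivative_scaleR assms
        uvec_has_vector_derivative vvec_has_vector_derivative)
  then show ?thesis
    unfolding yK_def[abs_def] by (simp add: algebra_simps)
qed

lemma xK_has_vector_derivative:
  assumes "(yK K has_vector_derivative Y) (at t within S)"
  shows "(xK K has_vector_derivative Y + uvec t - vvec t) (at t within S)"
proof -
  have "((\<lambda>s. yK K s - uvec s - vvec s) has_vector_derivative Y - vvec t - - uvec t) (at t within S)"
    by (intro has_vector_derivative_diff assms uvec_has_vector_derivative vvec_has_vector_derivative)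
  then show ?thesis
    unfolding xK_def[abs_def] by (simp add: algebra_simps)
qed

lemma yK_inner_uvec [simp]: "yK K t \<bullet> uvec t = supp K t"
  and yK_inner_vvec [simp]: "yK K t \<bullet> vvec t = supp K (t + pi/2)"
  by (simp_all add: yK_def inner_add_left)

lemma the_vvec_offset:
  assumes "A \<bullet> uvec t = y \<bullet> uvec t"
  shows "(THE g. y = A + g *\<^sub>R vvec t) = (y - A) \<bullet> vvec t"
proof (rule the_equality)
  have "y - A = ((y - A) \<bullet> vvec t) *\<^sub>R vvec t"
    using pt_decomp[of "y - A" t] assms by (simp add: inner_diff_left)
  then show "y = A + ((y - A) \<bullet> vvec t) *\<^sub>R vvec t"
    by (simp add: algebra_simps)
qed (simp add: inner_add_left)

lemma the_uvec_offset:
  assumes "C \<bullet> vvec t = y \<bullet> vvec t"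
  shows "(THE h. y = C + h *\<^sub>R uvec t) = (y - C) \<bullet> uvec t"
proof (rule the_equality)
  have "y - C = ((y - C) \<bullet> uvec t) *\<^sub>R uvec t"
    using pt_decomp[of "y - C" t] assms by (simp add: inner_diff_left)
  then show "y = C + ((y - C) \<bullet> uvec t) *\<^sub>R uvec t"
    by (simp add: algebra_simps)
qed (simp add: inner_add_left)

lemma yK_has_right_derivative:
  assumes "compact K" and "K \<noteq> {}"
  shows "(yK K has_vector_derivative (- gplus K t *\<^sub>R uvec t + hplus K t *\<^sub>R vvec t)) (at_right t)"
proof -
  have A: "vplus K t \<bullet> uvec t = yK K t \<bullet> uvec t"
    and C: "Cplus K t \<bullet> vvec t = yK K t \<bullet> vvec t"
    using vplus_edge_max[OF assms, of t] vplus_edge_max[OF assms, of "t + pi/2"]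
    by (auto simp: edge_def Cplus_def)
  have g: "gplus K t = supp K (t + pi/2) - vplus K t \<bullet> vvec t"
    using the_vvec_offset[OF A] by (simp add: gplus_def Aplus_def inner_diff_left)
  have h: "hplus K t = supp K t - Cplus K t \<bullet> uvec t"
    using the_uvec_offset[OF C] by (simp add: hplus_def inner_diff_left)
  show ?thesis
    using yK_has_vector_derivative[OF supp_has_right_derivative[OF assms, of 0 t, simplified]
        supp_has_right_derivative[OF assms, of "pi/2" t]]
    by (simp add: g h Cplus_def algebra_simps)
qed

lemma yK_has_left_derivative:
  assumes "compact K" and "K \<noteq> {}"
  shows "(yK K has_vector_derivative (- gminus K t *\<^sub>R uvec t + hminus K t *\<^sub>R vvec t)) (at_left t)"
proof -
  have A: "vminus K t \<bullet> uvec t = yK K t \<bullet> uvec t"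
    and C: "Cminus K t \<bullet> vvec t = yK K t \<bullet> vvec t"
    using vminus_edge_min[OF assms, of t] vminus_edge_min[OF assms, of "t + pi/2"]
    by (auto simp: edge_def Cminus_def)
  have g: "gminus K t = supp K (t + pi/2) - vminus K t \<bullet> vvec t"
    using the_vvec_offset[OF A] by (simp add: gminus_def Aminus_def inner_diff_left)
  have h: "hminus K t = supp K t - Cminus K t \<bullet> uvec t"
    using the_uvec_offset[OF C] by (simp add: hminus_def inner_diff_left)
  show ?thesis
    using yK_has_vector_derivative[OF supp_has_left_derivative[OF assms, of 0 t, simplified]
        supp_has_left_derivative[OF assms, of "pi/2" t]]
    by (simp add: g h Cminus_def algebra_simps)
qed

theorem theorem5p7:
  fixes \<omega> :: real and K :: "pt set"
  assumes "0 < \<omega>" and "\<omega> \<le> pi/2" and "is_cap \<omega> K"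
  shows "(\<forall>t. 0 \<le> t \<and> t < \<omega> \<longrightarrow>
            (yK K has_vector_derivative
               (- gplus K t *\<^sub>R uvec t + hplus K t *\<^sub>R vvec t)) (at_right t) \<and>
            (xK K has_vector_derivative
               (- (gplus K t - 1) *\<^sub>R uvec t + (hplus K t - 1) *\<^sub>R vvec t)) (at_right t))
       \<and> (\<forall>t. 0 < t \<and> t \<le> \<omega> \<longrightarrow>
            (yK K has_vector_derivative
               (- gminus K t *\<^sub>R uvec t + hminus K t *\<^sub>R vvec t)) (at_left t) \<and>
            (xK K has_vector_derivative
               (- (gminus K t - 1) *\<^sub>R uvec t + (hminus K t - 1) *\<^sub>R vvec t)) (at_left t))"
proof -
  have K: "compact K" "K \<noteq> {}"
    using \<open>is_cap \<omega> K\<close> by (auto simp: is_cap_def)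
  have x_form: "- (g - 1) *\<^sub>R uvec t + (h - 1) *\<^sub>R vvec t
      = (- g *\<^sub>R uvec t + h *\<^sub>R vvec t) + uvec t - vvec t" for g h t
    by (simp add: algebra_simps)
  show ?thesis
    unfolding x_form
    using yK_has_right_derivative[OF K] yK_has_left_derivative[OF K]
      xK_has_vector_derivative[OF yK_has_right_derivative[OF K]]
      xK_has_vector_derivative[OF yK_has_left_derivative[OF K]]
    by blast
qed

end
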